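(* Let $d=2$ or $d=3$, let $\Omega=(0,1)^d$, and let $\boldsymbol{\varphi}^{\rm hf}_1,\dots,\boldsymbol{\varphi}^{\rm hf}_{M_{\rm hf}}\in C^1(\mathbb{R}^d;\mathbb{R}^d)$ satisfy $$\boldsymbol{\varphi}^{\rm hf}_m(\mathbf{X})\cdot\mathbf{e}_i=0\quad\text{on }\{\mathbf{X}:\ X_i=0\text{ or }X_i=1\},\qquad m=1,\dots,M_{\rm hf},\ i=1,\dots,d.$$ For $\mathbf{a}\in\mathbb{R}^{M_{\rm hf}}$ define $\boldsymbol{\Psi}^{\rm hf}_{\mathbf{a}}(\mathbf{X})=\mathbf{X}+\sum_{m=1}^{M_{\rm hf}}a_m\boldsymbol{\varphi}^{\rm hf}_m(\mathbf{X})$ and $\mathfrak{J}^{\rm hf}_{\mathbf{a}}=\det(\widehat{\nabla}\boldsymbol{\Psi}^{\rm hf}_{\mathbf{a}})$. Then, for any $\bar{\mathbf{a}}\in\mathbb{R}^{M_{\rm hf}}$, $\boldsymbol{\Phi}=\boldsymbol{\Psi}^{\rm hf}_{\bar{\mathbf{a}}}$ is bijective from $\Omega=(0,1)^d$ into itself if $$\min_{\mathbf{X}\in\overline{\Omega}}\det\big(\widehat{\nabla}\boldsymbol{\Phi}(\mathbf{X})\big)>0.$$ Furthermore, for any $\epsilon\in(0,1)$ there exists a ball $B=\mathcal{B}_{r_\epsilon}(\mathbf{0})\subset\mathbb{R}^{M_{\rm hf}}$ of radius $r_\epsilon>0$ centered at $\mathbf{0}$ such that $\inf_{\mathbf{X}\in\Omega,\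 \mathbf{a}\in B}\mathfrak{J}^{\rm hf}_{\mathbf{a}}(\mathbf{X})\ge\epsilon$.
   Context: $\mathbf{e}_1,\dots,\mathbf{e}_d$ is the canonical basis of $\mathbb{R}^d$; $\widehat{\nabla}$ denotes the gradient (Jacobian) with respect to $\mathbf{X}$. *)

theory Defs
  imports "HOL-Analysis.Analysis"
begin

definition C1_map :: "(real^'n \<Rightarrow> real^'n) \<Rightarrow> bool" where
  "C1_map f \<longleftrightarrow> (\<exists>f'. (\<forall>x. (f has_derivative blinfun_apply (f' x)) (at x)) \<and> continuous_on UNIV f')"

definition unit_cube :: "(real^'n) set" where
  "unit_cube = {X. \<forall>i. 0 < X $ i \<and> X $ i < 1}"

definition jac :: "(real^'n \<Rightarrow> real^'n) \<Rightarrow> real^'n \<Rightarrow> real^'n^'n" where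
  "jac f X = matrix (frechet_derivative f (at X))"

definition Psi_hf :: "nat \<Rightarrow> (nat \<Rightarrow> real^'n \<Rightarrow> real^'n) \<Rightarrow> (nat \<Rightarrow> real) \<Rightarrow> real^'n \<Rightarrow> real^'n" where
  "Psi_hf M \<phi> a X = X + (\<Sum>m=1..M. a m *\<^sub>R \<phi> m X)"

definition J_hf :: "nat \<Rightarrow> (nat \<Rightarrow> real^'n \<Rightarrow> real^'n) \<Rightarrow> (nat \<Rightarrow> real) \<Rightarrow> real^'n \<Rightarrow> real" where
  "J_hf M \<phi> a X = det (jac (Psi_hf M \<phi> a) X)"

definition coef_norm :: "nat \<Rightarrow> (nat \<Rightarrow> real) \<Rightarrow> real" where
  "coef_norm M a = sqrt (\<Sum>m=1..M. (a m)^2)"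

end

theory Submission
  imports Defs
begin

text \<open>
  The map \<open>\<Phi>\<close> fixes the \<open>i\<close>-th coordinate on the two faces \<open>X\<^sub>i = 0\<close>, \<open>X\<^sub>i = 1\<close> of the
  cube. On such a face the \<open>i\<close>-th row of the Jacobian is therefore a multiple of \<open>e\<^sub>i\<close>, so the
  diagonal entry \<open>\<partial>\<^sub>i\<Phi>\<^sub>i\<close> does not vanish there; it does not vanish on the edge from \<open>0\<close>
  to \<open>e\<^sub>i\<close> either, and by the mean value theorem it is positive somewhere on that edge, so by
  connectedness it is positive on both faces. Hence \<open>\<Phi>\<close> moves points near a face to the same
  side of it, and together with local injectivity (inverse function theorem) and invariance of
  domain, \<open>\<Phi>\<close> maps each neighbourhood of a point of the closed cube onto a neighbourhood of
  its image within the cube's tangent cone. Extremum arguments then show that \<open>\<Phi>\<close> maps the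
  closed cube and the open cube into themselves and that only \<open>0\<close> is mapped to \<open>0\<close>. The values
  with two preimages in the closed cube form a closed set whose trace on the open cube is
  open; as \<open>0\<close> is not such a value, that trace is empty and \<open>\<Phi>\<close> is injective on the open
  cube, where its image is open and relatively closed, hence everything.

  The Jacobian bound is continuity of the determinant at the identity, uniform in \<open>X\<close> because
  the derivatives of the \<open>\<phi>\<^sub>m\<close> are bounded on the cube.
\<close>

lemma unit_cube_eq_box: "unit_cube = box 0 (1::real^'n)"
  by (auto simp: unit_cube_def mem_box_cart)

lemma unit_cube_nonempty: "(unit_cube :: (real^'n) set) \<noteq> {}"
proof -
  have "(\<chi> i. 1/2) \<in> (unit_cube :: (real^'n) set)" by (simp add: unit_cube_def)
  then show ?thesis by blast
qed

lemma closure_unit_cube: "closure unit_cube = cbox 0 (1::real^'n)"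
  using unit_cube_nonempty unfolding unit_cube_eq_box by (rule closure_box)

lemma open_unit_cube: "open unit_cube"
  unfolding unit_cube_eq_box by (rule open_box)

lemma connected_unit_cube: "connected unit_cube"
  unfolding unit_cube_eq_box by (simp add: is_interval_connected is_interval_box)

lemma bounded_unit_cube: "bounded unit_cube"
  unfolding unit_cube_eq_box by (rule bounded_box)

lemma unit_cube_subset_cbox: "unit_cube \<subseteq> cbox 0 (1::real^'n)"
  using closure_subset closure_unit_cube by blast

lemma has_real_derivative_component_on_line:
  fixes f :: "real^'n \<Rightarrow> real^'m"
  assumes "(f has_derivative f') (at (y + t *\<^sub>R v))"
  shows "((\<lambda>s. f (y + s *\<^sub>R v) $ k) has_real_derivative f' v $ k) (at t)"
proof -
  have "((\<lambda>s. y + s *\<^sub>R v) has_derivative (\<lambda>s. s *\<^sub>R v)) (at t)"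
    by (auto intro!: derivative_eq_intros)
  from has_derivative_compose[OF this assms]
  have "((\<lambda>s. f (y + s *\<^sub>R v) $ k) has_derivative (\<lambda>s. f' (s *\<^sub>R v) $ k)) (at t)"
    by (auto intro: bounded_linear.has_derivative[OF bounded_linear_vec_nth] simp: o_def)
  moreover have "(\<lambda>s. f' (s *\<^sub>R v) $ k) = (*) (f' v $ k)"
    using linear_cmul[OF has_derivative_linear[OF assms]] by (auto simp: fun_eq_iff)
  ultimately show ?thesis by (simp add: has_field_derivative_def)
qed

lemma derivative_along_level_hyperplane:
  fixes f :: "real^'n \<Rightarrow> real^'m"
  assumes "(f has_derivative f') (at x)"
    and level: "\<And>z. z $ k = x $ k \<Longrightarrow> f z $ i = f x $ i"
    and "l \<noteq> k"
  shows "f' (axis l 1) $ i = 0"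
proof -
  have "((\<lambda>s. f (x + s *\<^sub>R axis l 1) $ i) has_real_derivative f' (axis l 1) $ i) (at 0)"
    using assms(1) by (intro has_real_derivative_component_on_line) simp
  moreover have "(\<lambda>s. f (x + s *\<^sub>R axis l 1) $ i) = (\<lambda>s. f x $ i)"
    using \<open>l \<noteq> k\<close> by (intro ext level) (simp add: axis_def)
  ultimately show ?thesis
    using DERIV_unique DERIV_const by metis
qed

lemma continuous_on_det_matrix:
  fixes g :: "'a::topological_space \<Rightarrow> ((real^'n) \<Rightarrow>\<^sub>L (real^'n))"
  assumes "continuous_on S g"
  shows "continuous_on S (\<lambda>x. det (matrix (blinfun_apply (g x))))"
proof -
  have entry: "continuous_on S (\<lambda>x. g x (axis j 1) $ i)" for i j
    by (intro continuous_on_component continuous_intros assms)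
  show ?thesis
    unfolding det_def matrix_def by (simp, intro continuous_intros entry)
qed

lemma pos_if_INF_pos_on_compact:
  fixes g :: "'a::topological_space \<Rightarrow> real"
  assumes "compact S" "continuous_on S g" "0 < (INF x\<in>S. g x)" "x \<in> S"
  shows "0 < g x"
proof -
  have "bdd_below (g ` S)"
    by (intro bounded_imp_bdd_below compact_imp_bounded compact_continuous_image assms(1,2))
  then show ?thesis
    using cINF_lower[OF _ assms(4)] assms(3) by fastforce
qed

lemma pos_on_connected_if_nonzero:
  fixes g :: "'a::topological_space \<Rightarrow> real"
  assumes "connected S" "continuous_on S g" "\<And>x. x \<in> S \<Longrightarrow> g x \<noteq> 0"
    and "a \<in> S" "g a > 0" "x \<in> S"
  shows "g x > 0"
proof (rule ccontr)
  assume "\<not> g x > 0"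
  then have "0 \<in> {g x..g a}" using assms(5) by simp
  moreover have "{g x..g a} \<subseteq> g ` S"
    using assms by (intro connected_contains_Icc connected_continuous_image) auto
  ultimately show False using assms(3) by fastforce
qed

lemma connected_opposite_faces_and_edge:
  "connected ({x \<in> cbox 0 (1::real^'n). x $ j = 0} \<union> (\<lambda>t. t *\<^sub>R axis j 1) ` {0..1}
      \<union> {x \<in> cbox 0 1. x $ j = 1})"
proof -
  have convex_face: "convex {x \<in> cbox 0 (1::real^'n). x $ j = c}" for c
  proof -
    have "{x \<in> cbox 0 (1::real^'n). x $ j = c} = cbox 0 1 \<inter> {x. axis j 1 \<bullet> x = c}"
      by (auto simp: inner_axis')
    then show ?thesis by (simp add: convex_Int convex_hyperplane)
  qed
  have "0 \<in> {x \<in> cbox 0 (1::real^'n). x $ j = 0}" "0 \<in> (\<lambda>t. t *\<^sub>R axis j 1) ` {0..1}"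
    by (auto simp: mem_box_cart intro!: image_eqI[of _ _ 0])
  moreover have "axis j 1 \<in> (\<lambda>t. t *\<^sub>R axis j 1) ` {0..1}" "axis j (1::real) \<in> {x \<in> cbox 0 1. x $ j = 1}"
    by (auto simp: mem_box_cart axis_def intro!: image_eqI[of _ _ 1])
  ultimately show ?thesis
    by (intro connected_Un convex_connected convex_face connected_continuous_image)
       (auto intro!: continuous_intros)
qed

text \<open>The translate by \<open>x\<close> of the tangent cone of the closed cube at \<open>x\<close>.\<close>
definition face_halfspaces :: "real^'n \<Rightarrow> (real^'n) set" where
  "face_halfspaces x = {y. \<forall>j. (x $ j = 0 \<longrightarrow> 0 \<le> y $ j) \<and> (x $ j = 1 \<longrightarrow> y $ j \<le> 1)}"

locale face_preserving_cube_map =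
  fixes f :: "real^'n \<Rightarrow> real^'n" and f' :: "real^'n \<Rightarrow> ((real^'n) \<Rightarrow>\<^sub>L (real^'n))"
  assumes has_derivative: "\<And>x. (f has_derivative blinfun_apply (f' x)) (at x)"
    and continuous_derivative: "continuous_on UNIV f'"
    and fixes_faces: "\<And>x i. x $ i = 0 \<or> x $ i = 1 \<Longrightarrow> f x $ i = x $ i"
    and det_nonzero: "\<And>x. x \<in> cbox 0 1 \<Longrightarrow> det (matrix (blinfun_apply (f' x))) \<noteq> 0"
begin

definition partial :: "'n \<Rightarrow> 'n \<Rightarrow> real^'n \<Rightarrow> real" where
  "partial k l x = f' x (axis l 1) $ k"

lemma continuous_on_f: "continuous_on S f"
  by (meson has_derivative has_derivative_continuous continuous_at_imp_continuous_on)

lemma continuous_on_partial: "continuous_on S (partial k l)"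
  unfolding partial_def
  by (intro continuous_on_component continuous_intros continuous_on_subset[OF continuous_derivative])
     simp

lemma matrix_derivative_nth: "matrix (blinfun_apply (f' x)) $ k $ l = partial k l x"
  by (simp add: matrix_def partial_def)

lemma partial_eq_0_on_face:
  assumes "x $ k = 0 \<or> x $ k = 1" "l \<noteq> k"
  shows "partial k l x = 0"
  unfolding partial_def
  using assms fixes_faces by (intro derivative_along_level_hyperplane[OF has_derivative]) auto

lemma partial_diag_nonzero_on_face:
  assumes "x \<in> cbox 0 1" "x $ j = 0 \<or> x $ j = 1"
  shows "partial j j x \<noteq> 0"
proof
  assume "partial j j x = 0"
  then have "partial j l x = 0" for l
    using partial_eq_0_on_face[OF assms(2)] by (cases "l = j") auto
  then have "row j (matrix (blinfun_apply (f' x))) = 0"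
    by (simp add: row_def vec_eq_iff matrix_derivative_nth)
  then show False using det_nonzero[OF assms(1)] det_zero_row(1) by metis
qed

text \<open>On the edge from \<open>0\<close> to \<open>e\<^sub>j\<close> every other coordinate vanishes, so column \<open>j\<close> is
  a multiple of \<open>e\<^sub>j\<close>.\<close>
lemma partial_diag_nonzero_on_edge:
  assumes "0 \<le> t" "t \<le> 1"
  shows "partial j j (t *\<^sub>R axis j 1) \<noteq> 0"
proof
  assume "partial j j (t *\<^sub>R axis j 1) = 0"
  then have "partial k j (t *\<^sub>R axis j 1) = 0" for k
    using partial_eq_0_on_face[of "t *\<^sub>R axis j 1" k j] by (cases "k = j") (auto simp: axis_def)
  then have "column j (matrix (blinfun_apply (f' (t *\<^sub>R axis j 1)))) = 0"
    by (simp add: column_def vec_eq_iff matrix_derivative_nth)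
  moreover have "t *\<^sub>R axis j (1::real) \<in> cbox 0 1" using assms by (auto simp: mem_box_cart axis_def)
  ultimately show False using det_nonzero det_zero_column(1) by metis
qed

lemma partial_diag_pos_somewhere_on_edge: "\<exists>t\<in>{0..1}. partial j j (t *\<^sub>R axis j 1) > 0"
proof -
  have "\<exists>t>0. t < 1 \<and> f (0 + 1 *\<^sub>R axis j 1) $ j - f (0 + 0 *\<^sub>R axis j 1) $ j
      = (1 - 0) * partial j j (0 + t *\<^sub>R axis j 1)"
    unfolding partial_def
    by (rule MVT2) (use has_real_derivative_component_on_line[OF has_derivative, where y=0] in simp_all)
  moreover have "f (axis j 1) $ j = 1" "f 0 $ j = 0"
    by (simp_all add: fixes_faces axis_def)
  ultimately obtain t where "0 < t" "t < 1" "partial j j (t *\<^sub>R axis j 1) = 1"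
    by auto
  then show ?thesis by (intro bexI[of _ t]) auto
qed

lemma partial_diag_pos_on_face:
  assumes "x \<in> cbox 0 1" "x $ j = 0 \<or> x $ j = 1"
  shows "partial j j x > 0"
proof -
  define A where "A = {x \<in> cbox 0 (1::real^'n). x $ j = 0} \<union> (\<lambda>t. t *\<^sub>R axis j 1) ` {0..1}
      \<union> {x \<in> cbox 0 1. x $ j = 1}"
  have "connected A"
    unfolding A_def by (rule connected_opposite_faces_and_edge)
  moreover have "partial j j z \<noteq> 0" if "z \<in> A" for z
    using that partial_diag_nonzero_on_face partial_diag_nonzero_on_edge unfolding A_def
    by fastforce
  moreover obtain t where "t \<in> {0..1}" "partial j j (t *\<^sub>R axis j 1) > 0"
    using partial_diag_pos_somewhere_on_edge by blast
  moreover have "t *\<^sub>R axis j 1 \<in> A" "x \<in> A"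
    using \<open>t \<in> {0..1}\<close> assms unfolding A_def by blast+
  ultimately show ?thesis
    using pos_on_connected_if_nonzero[OF _ continuous_on_partial] by blast
qed

lemma coordinate_strict_mono_along_axis:
  assumes "convex S" "\<And>z. z \<in> S \<Longrightarrow> partial j j z > 0"
    and "w + s *\<^sub>R axis j 1 \<in> S" "w + t *\<^sub>R axis j 1 \<in> S" "s < t"
  shows "f (w + s *\<^sub>R axis j 1) $ j < f (w + t *\<^sub>R axis j 1) $ j"
proof (rule DERIV_pos_imp_increasing[OF \<open>s < t\<close>])
  fix u assume u: "s \<le> u" "u \<le> t"
  have "u *\<^sub>R axis j 1 \<in> closed_segment (s *\<^sub>R axis j 1) (t *\<^sub>R axis j (1::real))"
    using closed_segment_linear_image[of "\<lambda>u. u *\<^sub>R axis j (1::real)" s t] u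
    by (auto simp: closed_segment_eq_real_ivl linear_scaleR_left)
  then have "w + u *\<^sub>R axis j 1 \<in> closed_segment (w + s *\<^sub>R axis j 1) (w + t *\<^sub>R axis j 1)"
    by simp
  then have "w + u *\<^sub>R axis j 1 \<in> S"
    using assms(1,3,4) convex_contains_segment by blast
  then show "\<exists>d. ((\<lambda>u. f (w + u *\<^sub>R axis j 1) $ j) has_real_derivative d) (at u) \<and> d > 0"
    using has_real_derivative_component_on_line[OF has_derivative] assms(2)
    unfolding partial_def by blast
qed

lemma face_side_preserved_near:
  assumes "x \<in> cbox 0 1" "x $ j = c" "c = 0 \<or> c = 1"
  shows "\<forall>\<^sub>F y in nhds x. (y $ j < c \<longrightarrow> f y $ j < c) \<and> (c < y $ j \<longrightarrow> c < f y $ j)"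
proof -
  have "open {y. 0 < partial j j y}"
    by (intro open_Collect_less continuous_on_partial continuous_on_const)
  moreover have "0 < partial j j x"
    using partial_diag_pos_on_face assms by blast
  ultimately obtain \<delta> where "\<delta> > 0" "ball x \<delta> \<subseteq> {y. 0 < partial j j y}"
    unfolding open_contains_ball by blast
  then have pos: "\<And>z. z \<in> ball x \<delta> \<Longrightarrow> 0 < partial j j z"
    by blast
  have "(y $ j < c \<longrightarrow> f y $ j < c) \<and> (c < y $ j \<longrightarrow> c < f y $ j)" if y: "y \<in> ball x \<delta>" for y
  proof -
    define w where "w = y - (y $ j) *\<^sub>R axis j 1"
    have y_eq: "w + (y $ j) *\<^sub>R axis j 1 = y" by (simp add: w_def)
    have "norm (w + c *\<^sub>R axis j 1 - x) \<le> norm (y - x)"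
      using assms(2) by (intro norm_le_componentwise_cart) (simp add: w_def axis_def)
    then have on_face: "w + c *\<^sub>R axis j 1 \<in> ball x \<delta>"
      using y by (simp add: dist_norm norm_minus_commute)
    have f_on_face: "f (w + c *\<^sub>R axis j 1) $ j = c"
      using fixes_faces assms(3) by (simp add: w_def axis_def)
    note mono = coordinate_strict_mono_along_axis[OF convex_ball pos, where w=w]
    show ?thesis
    proof (intro conjI impI)
      assume "y $ j < c"
      then show "f y $ j < c"
        using mono[where s="y $ j" and t=c] on_face y f_on_face by (simp add: y_eq)
    next
      assume "c < y $ j"
      then show "c < f y $ j"
        using mono[where s=c and t="y $ j"] on_face y f_on_face by (simp add: y_eq)
    qed
  qed
  then show ?thesis
    using eventually_nhds_ball[OF \<open>\<delta> > 0\<close>] by (rule eventually_mono[rotated]) blast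
qed

lemma locally_injective:
  assumes "x \<in> cbox 0 1"
  shows "\<exists>\<delta>>0. inj_on f (ball x \<delta>)"
proof -
  have lin: "linear (blinfun_apply (f' x))"
    by (simp add: blinfun.bounded_linear_right bounded_linear.linear)
  then have "inj (blinfun_apply (f' x))"
    using det_nonzero[OF assms] det_nz_iff_inj by blast
  then obtain g where g: "linear g" "g \<circ> blinfun_apply (f' x) = id"
    using real_vector.linear_injective_left_inverse[OF lin] by blast
  then have "Blinfun g o\<^sub>L f' x = id_blinfun"
    by (intro blinfun_eqI) (simp add: bounded_linear_Blinfun_apply linear_conv_bounded_linear fun_eq_iff)
  then obtain U V g' where "open U" "x \<in> U" "homeomorphism U V f g'"
    by (rule inverse_function_theorem[OF open_UNIV has_derivative continuous_derivative UNIV_I]) blast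
  moreover from this obtain \<delta> where "\<delta> > 0" "ball x \<delta> \<subseteq> U"
    using open_contains_ball by blast
  ultimately show ?thesis
    by (metis homeomorphism_def inj_on_inverseI inj_on_subset)
qed

lemma open_image_small_ball:
  assumes "x \<in> cbox 0 1"
  obtains \<delta> where "\<delta> > 0" "\<And>r. r \<le> \<delta> \<Longrightarrow> open (f ` ball x r)"
proof -
  obtain \<delta> where "\<delta> > 0" "inj_on f (ball x \<delta>)"
    using locally_injective[OF assms] by blast
  then have "open (f ` ball x r)" if "r \<le> \<delta>" for r
    using that by (intro invariance_of_domain[OF continuous_on_f open_ball]) (auto intro: inj_on_subset)
  with \<open>\<delta> > 0\<close> show ?thesis
    using that by blast
qed

lemma eventually_in_cube_if_image_in_face_halfspaces:
  assumes "x \<in> cbox 0 1"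
  shows "\<forall>\<^sub>F z in nhds x. f z \<in> face_halfspaces x \<longrightarrow> z \<in> cbox 0 1"
proof -
  have "\<forall>\<^sub>F z in nhds x. (x $ j = 0 \<longrightarrow> 0 \<le> f z $ j) \<and> (x $ j = 1 \<longrightarrow> f z $ j \<le> 1)
      \<longrightarrow> 0 \<le> z $ j \<and> z $ j \<le> 1" for j
  proof -
    have coord: "((\<lambda>z. z $ j) \<longlongrightarrow> x $ j) (nhds x)"
      by (intro tendsto_intros filterlim_ident)
    have "0 \<le> x $ j" "x $ j \<le> 1"
      using assms by (simp_all add: mem_box_cart)
    then consider "x $ j = 0" | "x $ j = 1" | "0 < x $ j" "x $ j < 1"
      by linarith
    then show ?thesis
    proof cases
      case 1
      have "\<forall>\<^sub>F z in nhds x. z $ j < 1"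
        using order_tendstoD(2)[OF coord] 1 by simp
      moreover note face_side_preserved_near[OF assms 1, simplified]
      ultimately show ?thesis
        by eventually_elim (use 1 in auto)
    next
      case 2
      have "\<forall>\<^sub>F z in nhds x. 0 < z $ j"
        using order_tendstoD(1)[OF coord] 2 by simp
      moreover note face_side_preserved_near[OF assms 2, simplified]
      ultimately show ?thesis
        by eventually_elim (use 2 in auto)
    next
      case 3
      have "\<forall>\<^sub>F z in nhds x. 0 < z $ j" "\<forall>\<^sub>F z in nhds x. z $ j < 1"
        using order_tendstoD[OF coord] 3 by simp_all
      then show ?thesis
        by eventually_elim auto
    qed
  qed
  then show ?thesis
    by (rule eventually_mono[OF eventually_all_finite]) (auto simp: face_halfspaces_def mem_box_cart)
qed

lemma image_cube_contains_nhds_in_face_halfspaces: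
  assumes "x \<in> cbox 0 1"
  obtains e where "e > 0" "ball (f x) e \<inter> face_halfspaces x \<subseteq> f ` cbox 0 1"
proof -
  obtain d where "d > 0" and d: "\<And>z. dist z x < d \<Longrightarrow> f z \<in> face_halfspaces x \<Longrightarrow> z \<in> cbox 0 1"
    using eventually_in_cube_if_image_in_face_halfspaces[OF assms]
    unfolding eventually_nhds_metric by blast
  obtain d' where "d' > 0" and open_image: "\<And>r. r \<le> d' \<Longrightarrow> open (f ` ball x r)"
    using open_image_small_ball[OF assms] by blast
  define r where "r = min d d'"
  have "open (f ` ball x r)"
    by (simp add: open_image r_def)
  moreover have "f x \<in> f ` ball x r"
    using \<open>d > 0\<close> \<open>d' > 0\<close> by (simp add: r_def)
  ultimately obtain e where "e > 0" "ball (f x) e \<subseteq> f ` ball x r"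
    using open_contains_ball by blast
  moreover have "f ` ball x r \<inter> face_halfspaces x \<subseteq> f ` cbox 0 1"
    using d by (auto simp: r_def dist_commute)
  ultimately show ?thesis
    using that by blast
qed

lemma coordinate_perturbation_in_image:
  assumes "x \<in> cbox 0 1" "x $ i \<noteq> 0" "x $ i \<noteq> 1"
  obtains e where "e > 0" "\<And>t. \<bar>t\<bar> < e \<Longrightarrow> f x + t *\<^sub>R axis i 1 \<in> f ` cbox 0 1"
proof -
  obtain e where "e > 0" and e: "ball (f x) e \<inter> face_halfspaces x \<subseteq> f ` cbox 0 1"
    using image_cube_contains_nhds_in_face_halfspaces[OF assms(1)] .
  have "f x + t *\<^sub>R axis i 1 \<in> face_halfspaces x" for t
    using assms(2,3) fixes_faces by (auto simp: face_halfspaces_def axis_def)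
  moreover have "f x + t *\<^sub>R axis i 1 \<in> ball (f x) e" if "\<bar>t\<bar> < e" for t
    using that by (simp add: dist_norm)
  ultimately show ?thesis
    using that \<open>e > 0\<close> e by blast
qed

lemma coordinate_extremum_on_face:
  assumes "x \<in> cbox 0 1"
    and "(\<forall>z\<in>cbox 0 1. f z $ i \<le> f x $ i) \<or> (\<forall>z\<in>cbox 0 1. f x $ i \<le> f z $ i)"
  shows "x $ i = 0 \<or> x $ i = 1"
proof (rule ccontr)
  assume "\<not> (x $ i = 0 \<or> x $ i = 1)"
  then obtain e where "e > 0" and e: "\<And>t. \<bar>t\<bar> < e \<Longrightarrow> f x + t *\<^sub>R axis i 1 \<in> f ` cbox 0 1"
    using coordinate_perturbation_in_image[OF assms(1)] by blast
  obtain z\<^sub>1 z\<^sub>2 where "z\<^sub>1 \<in> cbox 0 1" "f z\<^sub>1 = f x + (e / 2) *\<^sub>R axis i 1"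
    and "z\<^sub>2 \<in> cbox 0 1" "f z\<^sub>2 = f x + (- e / 2) *\<^sub>R axis i 1"
    using e[of "e / 2"] e[of "- e / 2"] \<open>e > 0\<close> by (auto simp: image_iff)
  then show False
    using assms(2) \<open>e > 0\<close> by (force simp: axis_def)
qed

lemma image_cube_subset: "f ` cbox 0 1 \<subseteq> cbox 0 1"
proof -
  have "0 \<le> f z $ i \<and> f z $ i \<le> 1" if "z \<in> cbox 0 1" for z i
  proof -
    have "0 \<in> cbox 0 (1::real^'n)"
      by (simp add: mem_box_cart)
    then obtain x\<^sub>1 x\<^sub>2 where x: "x\<^sub>1 \<in> cbox 0 1" "\<forall>z\<in>cbox 0 1. f z $ i \<le> f x\<^sub>1 $ i"
        "x\<^sub>2 \<in> cbox 0 1" "\<forall>z\<in>cbox 0 1. f x\<^sub>2 $ i \<le> f z $ i"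
      using continuous_attains_sup[OF compact_cbox _ continuous_on_component[OF continuous_on_f]]
        continuous_attains_inf[OF compact_cbox _ continuous_on_component[OF continuous_on_f]]
      by (metis empty_iff)
    then have "x\<^sub>1 $ i = 0 \<or> x\<^sub>1 $ i = 1" "x\<^sub>2 $ i = 0 \<or> x\<^sub>2 $ i = 1"
      using coordinate_extremum_on_face by blast+
    then have "f x\<^sub>1 $ i \<le> 1" "0 \<le> f x\<^sub>2 $ i"
      using fixes_faces by auto
    then show ?thesis
      using x that by fastforce
  qed
  then show ?thesis
    by (auto simp: mem_box_cart)
qed

lemma image_unit_cube_subset: "f ` unit_cube \<subseteq> unit_cube"
proof
  fix y assume "y \<in> f ` unit_cube"
  then obtain x where x: "x \<in> unit_cube" "y = f x" by blast
  have "0 < x $ j \<and> x $ j < 1" for j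
    using x(1) unfolding unit_cube_def by blast
  then have "x $ j \<noteq> 0 \<and> x $ j \<noteq> 1" for j
    using less_irrefl by metis
  then have "face_halfspaces x = UNIV"
    by (simp add: face_halfspaces_def)
  moreover obtain e where "e > 0" "ball (f x) e \<inter> face_halfspaces x \<subseteq> f ` cbox 0 1"
    using image_cube_contains_nhds_in_face_halfspaces unit_cube_subset_cbox x(1) by blast
  ultimately have "ball (f x) e \<subseteq> cbox 0 1"
    using image_cube_subset by auto
  then have "f x \<in> interior (cbox 0 1)"
    using \<open>e > 0\<close> mem_interior by blast
  then show "y \<in> unit_cube"
    by (simp add: x(2) unit_cube_eq_box)
qed

lemma image_boundary_notin_unit_cube:
  assumes "x \<in> cbox 0 1" "x \<notin> unit_cube"
  shows "f x \<notin> unit_cube"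
proof -
  obtain j where "\<not> (0 < x $ j \<and> x $ j < 1)"
    using assms(2) unfolding unit_cube_def by blast
  moreover have "0 \<le> x $ j" "x $ j \<le> 1"
    using assms(1) by (simp_all add: mem_box_cart)
  ultimately have "x $ j = 0 \<or> x $ j = 1"
    by linarith
  then have "f x $ j = 0 \<or> f x $ j = 1"
    using fixes_faces by auto
  moreover have "0 < f x $ j" "f x $ j < 1" if "f x \<in> unit_cube"
    using that by (simp_all add: unit_cube_def)
  ultimately show ?thesis
    by auto
qed

lemma eq_0_if_image_eq_0:
  assumes "x \<in> cbox 0 1" "f x = 0"
  shows "x = 0"
proof (rule ccontr)
  assume "x \<noteq> 0"
  then obtain k where "x $ k \<noteq> 0"
    by (auto simp: vec_eq_iff)
  moreover have "x $ k \<noteq> 1"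
    using fixes_faces[of x k] assms(2) by auto
  ultimately obtain e where "e > 0" and e: "\<And>t. \<bar>t\<bar> < e \<Longrightarrow> f x + t *\<^sub>R axis k 1 \<in> f ` cbox 0 1"
    using coordinate_perturbation_in_image[OF assms(1)] by blast
  then have "f x + (- e / 2) *\<^sub>R axis k 1 \<in> f ` cbox 0 1"
    using e[of "- e / 2"] by simp
  then have "f x + (- e / 2) *\<^sub>R axis k 1 \<in> cbox 0 1"
    using image_cube_subset by blast
  then show False
    using \<open>e > 0\<close> assms(2) by (auto simp: mem_box_cart axis_def dest!: spec[of _ k])
qed

definition double_points :: "((real^'n) \<times> (real^'n)) set" where
  "double_points = {(a, b). a \<in> cbox 0 1 \<and> b \<in> cbox 0 1 \<and> a \<noteq> b \<and> f a = f b}"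

definition double_values :: "(real^'n) set" where
  "double_values = f ` fst ` double_points"

text \<open>Local injectivity keeps double points away from the diagonal.\<close>
lemma compact_double_points: "compact double_points"
proof -
  have "\<forall>x\<in>cbox 0 1. \<exists>\<delta>>0. inj_on f (ball x \<delta>)"
    using locally_injective by blast
  then obtain \<delta> where \<delta>: "\<And>x. x \<in> cbox 0 1 \<Longrightarrow> \<delta> x > 0 \<and> inj_on f (ball x (\<delta> x))"
    by metis
  define U where "U = (\<Union>x\<in>cbox 0 1. ball x (\<delta> x) \<times> ball x (\<delta> x))"
  have "open U"
    unfolding U_def by (intro open_UN ballI open_Times open_ball)
  have "closed {p :: (real^'n) \<times> (real^'n). f (fst p) = f (snd p)}"
    by (intro closed_Collect_eq continuous_on_compose2[OF continuous_on_f] continuous_intros) auto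
  moreover have "double_points = (cbox 0 1 \<times> cbox 0 1 \<inter> {p. f (fst p) = f (snd p)}) - U"
  proof (intro equalityI subsetI)
    fix p assume "p \<in> double_points"
    then obtain a b where p: "p = (a, b)" "a \<in> cbox 0 1" "b \<in> cbox 0 1" "a \<noteq> b" "f a = f b"
      by (auto simp: double_points_def)
    have "p \<notin> U"
    proof
      assume "p \<in> U"
      then obtain x where x: "x \<in> cbox 0 1" "a \<in> ball x (\<delta> x)" "b \<in> ball x (\<delta> x)"
        unfolding U_def p by blast
      then have "inj_on f (ball x (\<delta> x))"
        using \<delta> by blast
      then show False
        using x p(4,5) by (metis inj_onD)
    qed
    then show "p \<in> (cbox 0 1 \<times> cbox 0 1 \<inter> {p. f (fst p) = f (snd p)}) - U"
      using p by simp
  next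
    fix p assume p: "p \<in> (cbox 0 1 \<times> cbox 0 1 \<inter> {p. f (fst p) = f (snd p)}) - U"
    have "fst p \<noteq> snd p"
    proof
      assume "fst p = snd p"
      moreover have "fst p \<in> cbox 0 1" "\<delta> (fst p) > 0"
        using p \<delta> by auto
      ultimately have "p \<in> U"
        unfolding U_def by (intro UN_I[of "fst p"]) (auto simp: mem_Times_iff)
      then show False
        using p by blast
    qed
    then show "p \<in> double_points"
      using p by (auto simp: double_points_def)
  qed
  ultimately show ?thesis
    using \<open>open U\<close> by (simp add: compact_diff compact_Int_closed compact_Times)
qed

lemma double_value_nhds:
  assumes "(a, b) \<in> double_points" "f a \<in> unit_cube"
  obtains W where "open W" "f a \<in> W" "W \<subseteq> double_values"
proof -
  have ab: "a \<in> cbox 0 1" "b \<in> cbox 0 1" "a \<noteq> b" "f a = f b"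
    using assms(1) by (auto simp: double_points_def)
  have "a \<in> unit_cube"
    using image_boundary_notin_unit_cube[OF ab(1)] assms(2) by blast
  then obtain r\<^sub>a where "r\<^sub>a > 0" "ball a r\<^sub>a \<subseteq> unit_cube"
    using open_unit_cube openE by blast
  have "b \<in> unit_cube"
    using image_boundary_notin_unit_cube[OF ab(2)] assms(2) ab(4) by auto
  then obtain r\<^sub>b where "r\<^sub>b > 0" "ball b r\<^sub>b \<subseteq> unit_cube"
    using open_unit_cube openE by blast
  obtain \<delta>\<^sub>a where "\<delta>\<^sub>a > 0" and open_a: "\<And>r. r \<le> \<delta>\<^sub>a \<Longrightarrow> open (f ` ball a r)"
    using open_image_small_ball[OF ab(1)] by blast
  obtain \<delta>\<^sub>b where "\<delta>\<^sub>b > 0" and open_b: "\<And>r. r \<le> \<delta>\<^sub>b \<Longrightarrow> open (f ` ball b r)"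
    using open_image_small_ball[OF ab(2)] by blast
  define r where "r = min (min r\<^sub>a r\<^sub>b) (min (dist a b / 2) (min \<delta>\<^sub>a \<delta>\<^sub>b))"
  have "r > 0"
    using \<open>r\<^sub>a > 0\<close> \<open>r\<^sub>b > 0\<close> \<open>\<delta>\<^sub>a > 0\<close> \<open>\<delta>\<^sub>b > 0\<close> ab(3) by (simp add: r_def)
  have "ball a r \<subseteq> ball a r\<^sub>a" "ball b r \<subseteq> ball b r\<^sub>b"
    by (simp_all add: subset_ball r_def)
  then have in_cube: "ball a r \<subseteq> cbox 0 1" "ball b r \<subseteq> cbox 0 1"
    using \<open>ball a r\<^sub>a \<subseteq> unit_cube\<close> \<open>ball b r\<^sub>b \<subseteq> unit_cube\<close> unit_cube_subset_cbox by blast+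
  have "r + r \<le> dist a b"
    by (simp add: r_def)
  then have disjoint: "ball a r \<inter> ball b r = {}"
    by (rule disjoint_ballI)
  show ?thesis
  proof
    show "open (f ` ball a r \<inter> f ` ball b r)"
      by (intro open_Int open_a open_b) (simp_all add: r_def)
    show "f a \<in> f ` ball a r \<inter> f ` ball b r"
      using \<open>r > 0\<close> ab(4) by (metis IntI centre_in_ball imageI)
    show "f ` ball a r \<inter> f ` ball b r \<subseteq> double_values"
    proof
      fix y assume "y \<in> f ` ball a r \<inter> f ` ball b r"
      then obtain a' b' where "a' \<in> ball a r" "b' \<in> ball b r" "y = f a'" "y = f b'"
        by blast
      then have "(a', b') \<in> double_points"
        using in_cube disjoint unfolding double_points_def by blast
      then show "y \<in> double_values"
        using \<open>y = f a'\<close> unfolding double_values_def by force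
    qed
  qed
qed

lemma closed_double_values: "closed double_values"
  unfolding double_values_def image_image
  by (intro compact_imp_closed compact_continuous_image compact_double_points
      continuous_on_compose2[OF continuous_on_f continuous_on_fst]) auto

lemma open_double_values_Int_unit_cube: "open (double_values \<inter> unit_cube)"
proof (rule Topological_Spaces.openI)
  fix y assume "y \<in> double_values \<inter> unit_cube"
  then obtain a b where "(a, b) \<in> double_points" "y = f a" "y \<in> unit_cube"
    unfolding double_values_def by force
  then obtain W where "open W" "y \<in> W" "W \<subseteq> double_values"
    using double_value_nhds by metis
  then show "\<exists>T. open T \<and> y \<in> T \<and> T \<subseteq> double_values \<inter> unit_cube"
    using \<open>y \<in> unit_cube\<close> open_unit_cube by (intro exI[of _ "W \<inter> unit_cube"]) auto
qed

lemma zero_notin_double_values: "0 \<notin> double_values"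
proof
  assume "0 \<in> double_values"
  then obtain a b where "(a, b) \<in> double_points" "f a = 0"
    unfolding double_values_def by force
  then have "a \<in> cbox 0 1" "b \<in> cbox 0 1" "a \<noteq> b" "f a = 0" "f b = 0"
    by (auto simp: double_points_def)
  then show False
    using eq_0_if_image_eq_0 by metis
qed

text \<open>Clopen in the connected open cube, and not all of it: its closure would then contain
  the value \<open>0\<close>.\<close>
lemma double_values_Int_unit_cube: "double_values \<inter> unit_cube = {}"
proof -
  have "openin (top_of_set unit_cube) (double_values \<inter> unit_cube)"
    by (rule open_openin_trans[OF open_unit_cube open_double_values_Int_unit_cube]) blast
  moreover have "closedin (top_of_set unit_cube) (double_values \<inter> unit_cube)"
    using closedin_closed_Int[OF closed_double_values, of unit_cube] by (simp add: Int_commute)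
  ultimately have "double_values \<inter> unit_cube = {} \<or> double_values \<inter> unit_cube = unit_cube"
    using connected_clopen[THEN iffD1, OF connected_unit_cube, rule_format] by blast
  moreover have "\<not> unit_cube \<subseteq> double_values"
  proof
    assume "unit_cube \<subseteq> double_values"
    then have "closure unit_cube \<subseteq> double_values"
      using closed_double_values by (rule closure_minimal)
    moreover have "0 \<in> closure unit_cube"
      by (simp add: closure_unit_cube mem_box_cart)
    ultimately show False
      using zero_notin_double_values by blast
  qed
  ultimately show ?thesis
    by blast
qed

lemma inj_on_unit_cube: "inj_on f unit_cube"
proof (rule inj_onI, rule ccontr)
  fix a b assume "a \<in> unit_cube" "b \<in> unit_cube" "f a = f b" "a \<noteq> b"
  then have "f a \<in> double_values"
    using unit_cube_subset_cbox unfolding double_values_def double_points_def by force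
  moreover have "f a \<in> unit_cube"
    using image_unit_cube_subset \<open>a \<in> unit_cube\<close> by blast
  ultimately show False
    using double_values_Int_unit_cube by blast
qed

lemma image_unit_cube: "f ` unit_cube = unit_cube"
proof -
  have "f ` unit_cube = unit_cube \<inter> f ` cbox 0 1"
  proof
    show "f ` unit_cube \<subseteq> unit_cube \<inter> f ` cbox 0 1"
      using image_unit_cube_subset unit_cube_subset_cbox by blast
    show "unit_cube \<inter> f ` cbox 0 1 \<subseteq> f ` unit_cube"
      using image_boundary_notin_unit_cube by blast
  qed
  moreover have "closed (f ` cbox 0 1)"
    by (intro compact_imp_closed compact_continuous_image continuous_on_f compact_cbox)
  ultimately have "closedin (top_of_set unit_cube) (f ` unit_cube)"
    by (simp add: closedin_closed_Int)
  moreover have "openin (top_of_set unit_cube) (f ` unit_cube)"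
    by (rule open_openin_trans[OF open_unit_cube
          invariance_of_domain[OF continuous_on_f open_unit_cube inj_on_unit_cube]
          image_unit_cube_subset])
  moreover have "f ` unit_cube \<noteq> {}"
    using unit_cube_nonempty by blast
  ultimately show ?thesis
    using connected_clopen[THEN iffD1, OF connected_unit_cube, rule_format] by blast
qed

lemma bij_betw_unit_cube: "bij_betw f unit_cube unit_cube"
  by (simp add: bij_betw_def inj_on_unit_cube image_unit_cube)

end

lemma jac_eq_matrix_derivative:
  assumes "(f has_derivative blinfun_apply D) (at X)"
  shows "jac f X = matrix (blinfun_apply D)"
  unfolding jac_def using frechet_derivative_at[OF assms] by simp

lemma continuous_on_det_jac:
  assumes "C1_map f"
  shows "continuous_on S (\<lambda>X. det (jac f X))"
proof -
  obtain f' where f': "\<And>x. (f has_derivative blinfun_apply (f' x)) (at x)"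
    and "continuous_on UNIV f'"
    using assms unfolding C1_map_def by blast
  then show ?thesis
    using continuous_on_det_matrix[OF continuous_on_subset, of UNIV f' S]
    by (simp add: jac_eq_matrix_derivative[OF f'])
qed

lemma bij_betw_unit_cube_if_fixes_faces:
  fixes f :: "real^'n \<Rightarrow> real^'n"
  assumes "C1_map f"
    and "\<And>X i. X $ i = 0 \<or> X $ i = 1 \<Longrightarrow> f X $ i = X $ i"
    and "\<And>X. X \<in> closure unit_cube \<Longrightarrow> det (jac f X) \<noteq> 0"
  shows "bij_betw f unit_cube unit_cube"
proof -
  obtain f' where f': "\<And>x. (f has_derivative blinfun_apply (f' x)) (at x)" "continuous_on UNIV f'"
    using assms(1) unfolding C1_map_def by blast
  interpret face_preserving_cube_map f f'
    using f' assms(2,3) by unfold_locales (auto simp: closure_unit_cube jac_eq_matrix_derivative[OF f'(1)])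
  show ?thesis
    by (rule bij_betw_unit_cube)
qed

lemma C1_map_choose_derivatives:
  assumes "\<And>m. m \<in> A \<Longrightarrow> C1_map (\<phi> m)"
  shows "\<exists>F. \<forall>m\<in>A. (\<forall>x. (\<phi> m has_derivative blinfun_apply (F m x)) (at x))
      \<and> continuous_on UNIV (F m)"
  using assms unfolding C1_map_def by (intro bchoice) blast

lemma Psi_hf_has_derivative:
  assumes "\<And>m. m \<in> {1..M} \<Longrightarrow> (\<phi> m has_derivative blinfun_apply (F m x)) (at x)"
  shows "(Psi_hf M \<phi> a has_derivative blinfun_apply (id_blinfun + (\<Sum>m=1..M. a m *\<^sub>R F m x))) (at x)"
proof -
  have "((\<lambda>X. X + (\<Sum>m=1..M. a m *\<^sub>R \<phi> m X)) has_derivative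
      (\<lambda>h. h + (\<Sum>m=1..M. a m *\<^sub>R F m x h))) (at x)"
    using assms by (intro derivative_eq_intros) auto
  moreover have "blinfun_apply (id_blinfun + (\<Sum>m=1..M. a m *\<^sub>R F m x))
      = (\<lambda>h. h + (\<Sum>m=1..M. a m *\<^sub>R F m x h))"
    by (rule ext) (simp add: blinfun.add_left blinfun.sum_left blinfun.scaleR_left)
  ultimately show ?thesis
    by (simp add: Psi_hf_def[abs_def])
qed

lemma C1_map_Psi_hf:
  assumes "\<And>m. m \<in> {1..M} \<Longrightarrow> C1_map (\<phi> m)"
  shows "C1_map (Psi_hf M \<phi> a)"
proof -
  from C1_map_choose_derivatives[OF assms] obtain F
    where F: "\<forall>m\<in>{1..M}. (\<forall>x. (\<phi> m has_derivative blinfun_apply (F m x)) (at x))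
      \<and> continuous_on UNIV (F m)" ..
  then have "(Psi_hf M \<phi> a has_derivative blinfun_apply (id_blinfun + (\<Sum>m=1..M. a m *\<^sub>R F m x))) (at x)"
    for x
    by (intro Psi_hf_has_derivative) blast
  moreover have "continuous_on UNIV (\<lambda>x. id_blinfun + (\<Sum>m=1..M. a m *\<^sub>R F m x))"
    using F by (intro continuous_intros) auto
  ultimately show ?thesis
    unfolding C1_map_def by (intro exI[of _ "\<lambda>x. id_blinfun + (\<Sum>m=1..M. a m *\<^sub>R F m x)"] conjI allI)
qed

lemma Psi_hf_fixes_coordinate:
  assumes "\<And>m. m \<in> {1..M} \<Longrightarrow> \<phi> m X \<bullet> axis i 1 = 0"
  shows "Psi_hf M \<phi> a X $ i = X $ i"
  using assms by (simp add: Psi_hf_def inner_axis)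

lemma det_near_identity:
  assumes "\<epsilon> < 1"
  obtains \<delta> where "\<delta> > 0"
    "\<And>L :: (real^'n) \<Rightarrow>\<^sub>L (real^'n). norm L < \<delta> \<Longrightarrow> \<epsilon> < det (matrix (blinfun_apply (id_blinfun + L)))"
proof -
  let ?g = "\<lambda>L :: (real^'n) \<Rightarrow>\<^sub>L (real^'n). det (matrix (blinfun_apply (id_blinfun + L)))"
  have "isCont ?g 0"
    using continuous_on_det_matrix[of UNIV "\<lambda>L. id_blinfun + L"]
    by (simp add: continuous_on_eq_continuous_at continuous_on_add continuous_on_id del: isCont_def)
       blast
  then have "(?g \<longlongrightarrow> ?g 0) (nhds 0)"
    unfolding isCont_def by (rule tendsto_at_iff_tendsto_nhds[THEN iffD1])
  moreover have "?g 0 = 1"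
    by (simp add: matrix_id_mat_1[unfolded id_def])
  ultimately have "(?g \<longlongrightarrow> 1) (nhds 0)"
    by simp
  then have "\<forall>\<^sub>F L in nhds 0. \<epsilon> < ?g L"
    using assms by (rule order_tendstoD(1))
  then show ?thesis
    using that unfolding eventually_nhds_metric by (auto simp: dist_norm)
qed

lemma abs_le_coef_norm:
  assumes "m \<in> {1..M}"
  shows "\<bar>a m\<bar> \<le> coef_norm M a"
proof -
  have "(a m)\<^sup>2 \<le> (\<Sum>k=1..M. (a k)\<^sup>2)"
    using assms by (intro member_le_sum) auto
  then show ?thesis
    unfolding coef_norm_def using real_sqrt_le_mono by fastforce
qed

lemma J_hf_uniformly_gt:
  fixes \<phi> :: "nat \<Rightarrow> real^'n \<Rightarrow> real^'n"
  assumes C1: "\<And>m. m \<in> {1..M} \<Longrightarrow> C1_map (\<phi> m)" and "bounded S" "\<epsilon> < 1"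
  shows "\<exists>r>0. \<forall>X\<in>S. \<forall>a. coef_norm M a < r \<longrightarrow> \<epsilon> < J_hf M \<phi> a X"
proof -
  from C1_map_choose_derivatives[OF C1] obtain F
    where "\<forall>m\<in>{1..M}. (\<forall>x. (\<phi> m has_derivative blinfun_apply (F m x)) (at x))
      \<and> continuous_on UNIV (F m)" ..
  then have F: "\<And>m x. m \<in> {1..M} \<Longrightarrow> (\<phi> m has_derivative blinfun_apply (F m x)) (at x)"
    and cont_F: "\<And>m. m \<in> {1..M} \<Longrightarrow> continuous_on UNIV (F m)"
    by blast+
  have "\<exists>B>0. \<forall>X\<in>S. norm (F m X) \<le> B" if "m \<in> {1..M}" for m
  proof -
    have "bounded (F m ` closure S)"
      using cont_F[OF that] \<open>bounded S\<close>
      by (intro compact_imp_bounded compact_continuous_image) (auto intro: continuous_on_subset)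
    then obtain B where "B > 0" "\<forall>y \<in> F m ` closure S. norm y \<le> B"
      unfolding bounded_pos by blast
    then show ?thesis
      using closure_subset by (intro exI[of _ B]) fastforce
  qed
  then have "\<forall>m\<in>{1..M}. \<exists>B>0. \<forall>X\<in>S. norm (F m X) \<le> B"
    by blast
  from bchoice[OF this] obtain B where "\<forall>m\<in>{1..M}. B m > 0 \<and> (\<forall>X\<in>S. norm (F m X) \<le> B m)" ..
  then have B: "\<And>m X. m \<in> {1..M} \<Longrightarrow> X \<in> S \<Longrightarrow> norm (F m X) \<le> B m"
    and B_pos: "\<And>m. m \<in> {1..M} \<Longrightarrow> B m > 0"
    by blast+
  define C where "C = (\<Sum>m=1..M. B m)"
  have "C \<ge> 0"
    unfolding C_def using B_pos by (intro sum_nonneg) (auto intro: less_imp_le)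
  obtain \<delta> where "\<delta> > 0" and \<delta>: "\<And>L :: (real^'n) \<Rightarrow>\<^sub>L (real^'n). norm L < \<delta> \<Longrightarrow>
      \<epsilon> < det (matrix (blinfun_apply (id_blinfun + L)))"
    using det_near_identity[OF \<open>\<epsilon> < 1\<close>] by blast
  define r where "r = \<delta> / (C + 1)"
  have "\<epsilon> < J_hf M \<phi> a X" if "X \<in> S" "coef_norm M a < r" for X a
  proof -
    have "norm (\<Sum>m=1..M. a m *\<^sub>R F m X) \<le> (\<Sum>m=1..M. r * B m)"
    proof (rule order_trans[OF norm_sum sum_mono])
      fix m assume m: "m \<in> {1..M}"
      have "\<bar>a m\<bar> \<le> r"
        using abs_le_coef_norm[OF m, of a] that(2) by simp
      then show "norm (a m *\<^sub>R F m X) \<le> r * B m"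
        using B[OF m that(1)] by (simp add: mult_mono)
    qed
    also have "\<dots> = r * C"
      by (simp add: C_def sum_distrib_left)
    also have "\<dots> < \<delta>"
      using \<open>\<delta> > 0\<close> \<open>C \<ge> 0\<close> by (simp add: r_def field_simps)
    finally have "\<epsilon> < det (matrix (blinfun_apply (id_blinfun + (\<Sum>m=1..M. a m *\<^sub>R F m X))))"
      by (rule \<delta>)
    moreover have "jac (Psi_hf M \<phi> a) X = matrix (blinfun_apply (id_blinfun + (\<Sum>m=1..M. a m *\<^sub>R F m X)))"
      by (intro jac_eq_matrix_derivative Psi_hf_has_derivative F)
    ultimately show ?thesis
      by (simp add: J_hf_def)
  qed
  moreover have "r > 0"
    using \<open>\<delta> > 0\<close> \<open>C \<ge> 0\<close> by (simp add: r_def)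
  ultimately show ?thesis
    by blast
qed

theorem proposition2:
  fixes M :: nat and \<phi> :: "nat \<Rightarrow> real^'n \<Rightarrow> real^'n"
  assumes dim: "CARD('n) = 2 \<or> CARD('n) = 3"
    and C1: "\<And>m. m \<in> {1..M} \<Longrightarrow> C1_map (\<phi> m)"
    and bdry: "\<And>m i X. m \<in> {1..M} \<Longrightarrow> X $ i = 0 \<or> X $ i = 1 \<Longrightarrow> \<phi> m X \<bullet> axis i 1 = 0"
  shows "(\<forall>abar. (INF X\<in>closure unit_cube. det (jac (Psi_hf M \<phi> abar) X)) > 0
            \<longrightarrow> bij_betw (Psi_hf M \<phi> abar) unit_cube unit_cube)
       \<and> (\<forall>\<epsilon>. 0 < \<epsilon> \<and> \<epsilon> < 1 \<longrightarrow>
            (\<exists>r>0. (INF p\<in>unit_cube \<times> {a. coef_norm M a < r}. J_hf M \<phi> (snd p) (fst p)) \<ge> \<epsilon>))"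
proof -
  have "bij_betw (Psi_hf M \<phi> abar) unit_cube unit_cube"
    if "(INF X\<in>closure unit_cube. det (jac (Psi_hf M \<phi> abar) X)) > 0" for abar
  proof (rule bij_betw_unit_cube_if_fixes_faces)
    show C1_Psi: "C1_map (Psi_hf M \<phi> abar)"
      using C1 by (rule C1_map_Psi_hf)
    show "det (jac (Psi_hf M \<phi> abar) X) \<noteq> 0" if "X \<in> closure unit_cube" for X
      using pos_if_INF_pos_on_compact[OF _ continuous_on_det_jac[OF C1_Psi] \<open>0 < (INF X\<in>_. _)\<close> that]
      by (simp add: closure_unit_cube)
  qed (use bdry in \<open>intro Psi_hf_fixes_coordinate\<close>)
  moreover have "\<exists>r>0. (INF p\<in>unit_cube \<times> {a. coef_norm M a < r}. J_hf M \<phi> (snd p) (fst p)) \<ge> \<epsilon>"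
    if "0 < \<epsilon>" "\<epsilon> < 1" for \<epsilon>
  proof -
    obtain r where "r > 0" and "\<forall>X\<in>unit_cube. \<forall>a. coef_norm M a < r \<longrightarrow> \<epsilon> < J_hf M \<phi> a X"
      using J_hf_uniformly_gt[where M=M and \<phi>=\<phi>, OF C1 bounded_unit_cube \<open>\<epsilon> < 1\<close>] by blast
    moreover have "(\<lambda>_. 0) \<in> {a. coef_norm M a < r}"
      using \<open>r > 0\<close> by (simp add: coef_norm_def)
    then have "unit_cube \<times> {a. coef_norm M a < r} \<noteq> {}"
      using unit_cube_nonempty by blast
    ultimately show ?thesis
      by (intro exI[of _ r] conjI cINF_greatest) (auto intro: less_imp_le)
  qed
  ultimately show ?thesis
    by blast
qed

end
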